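(* Let $n\ge 1$. Let $\bar\pi=\bar\pi(0,d_1,\dots,d_t)$ and $\bar\pi'=\bar\pi(0,d'_1,\dots,d'_u)$ be normalized pure diagrams with $0\le t,u\le n$, and suppose $\bar\pi<\bar\pi'$ in the partial order. Then $H(\bar\pi',t)-H(\bar\pi,t)$ is a nonzero power series all of whose coefficients are nonnegative; i.e. the Hilbert series is strictly increasing on the partially ordered set of normalized pure diagrams generated in degree zero.
   Context: For integers $d_0<\dots<d_t$, $0\le t\le n$, the pure diagram $\pi(d_0,\dots,d_t)=(\pi_{i,j})_{0\le i\le n,\,j\in\mathbb Z}$ has entry $(-1)^i\prod_{0\le j\le t,\,j\ne i}\frac{1}{d_j-d_i}$ at position $(i,d_i)$, $i=0,\dots,t$, and $0$ elsewhere. When $d_0=0$, the normalized pure diagram is $\bar\pi(0,d_1,\dots,d_t)=d_1d_2\cdots d_t\,\pi(0,d_1,\dots,d_t)$. Partial order: $\pi(d_0,\dots,d_t)\le\pi(d'_0,\dots,d'_u)$ iff $t\ge u$ and $d_i\le d'_i$ for $i=0,\dots,u$ (same for the normalized diagrams). For an array $\beta=(\beta_{i,j})$, its Hilbert series is $H(\beta,t)=\frac{1}{(1-t)^n}\sum_{i=0}^n\sum_j(-1)^i\beta_{i,j}t^j$, expanded as a power series in $t$. *)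

theory Defs
  imports "HOL-Computational_Algebra.Formal_Power_Series"
begin

text \<open>A degree sequence d_0 < ... < d_t is a list [d_0, ..., d_t] of integers
  (so t = length ds - 1).\<close>

definition strict_degs :: "int list \<Rightarrow> bool" where
  "strict_degs ds \<longleftrightarrow> ds \<noteq> [] \<and> sorted_wrt (<) ds"

definition pure_diagram :: "int list \<Rightarrow> nat \<Rightarrow> int \<Rightarrow> real" where
  "pure_diagram ds i j =
     (if i < length ds \<and> j = ds ! i
      then (-1) ^ i * (\<Prod>k\<in>{k. k < length ds \<and> k \<noteq> i}. 1 / real_of_int (ds ! k - ds ! i))
      else 0)"

definition norm_pure_diagram :: "int list \<Rightarrow> nat \<Rightarrow> int \<Rightarrow> real" where
  "norm_pure_diagram ds i j =
     (\<Prod>k\<in>{1..<length ds}. real_of_int (ds ! k)) * pure_diagram ds i j"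

definition degs_le :: "int list \<Rightarrow> int list \<Rightarrow> bool" where
  "degs_le ds ds' \<longleftrightarrow> length ds \<ge> length ds' \<and> (\<forall>i < length ds'. ds ! i \<le> ds' ! i)"

definition degs_less :: "int list \<Rightarrow> int list \<Rightarrow> bool" where
  "degs_less ds ds' \<longleftrightarrow> degs_le ds ds' \<and> ds \<noteq> ds'"

text \<open>Hilbert series H(beta,t) = (1-t)^(-n) * sum_i sum_j (-1)^i beta_{i,j} t^j,
  for arrays supported in nonnegative degrees (columns j = 0,1,2,...), 0 \<le> i \<le> n.\<close>
definition hilbert_series :: "nat \<Rightarrow> (nat \<Rightarrow> int \<Rightarrow> real) \<Rightarrow> real fps" where
  "hilbert_series n \<beta> =
     Abs_fps (\<lambda>j. \<Sum>i\<le>n. (-1) ^ i * \<beta> i (int j)) * inverse ((1 - fps_X) ^ n)"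

end

theory Submission
  imports Defs
begin

(*
  For a degree set S = {0, d_1, ..., d_t} the alternating column sums of the pure diagram form
  the power series N(S) = sum_{x in S} X^x / prod_{k in S - {x}} (k - x), which up to sign is the
  divided difference of x |-> X^x on the nodes S, and H(normalized pi(S)) = d_1...d_t N(S) / (1 - X)^n.
  Divided differences satisfy (b - a) N(T) = N(T - {b}) - N(T - {a}); on an interval of m + 1
  consecutive integers N is a monomial times (1 - X)^m, and filling a gap writes N(S) as a positive
  combination of two narrower instances. Hence N(S) is (1 - X)^m times a nonzero series with
  nonnegative coefficients whenever card S = m + 1.

  A strict relation in the partial order is a chain of elementary moves: deleting the last degree,
  or raising one degree d to d + 1 when d + 1 is free. By the recurrence each move changes the
  Hilbert series by a positive multiple of N(S') / (1 - X)^n with card S' <= n + 1, which is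
  nonzero with nonnegative coefficients.
*)

definition nonneg_nonzero :: "real fps \<Rightarrow> bool" where
  "nonneg_nonzero Q \<longleftrightarrow> Q \<noteq> 0 \<and> (\<forall>k. 0 \<le> fps_nth Q k)"

lemma nonneg_nonzero_add:
  assumes "nonneg_nonzero P" "nonneg_nonzero Q"
  shows "nonneg_nonzero (P + Q)"
proof -
  obtain k where "fps_nth P k \<noteq> 0"
    using assms(1) unfolding nonneg_nonzero_def by (metis fps_ext fps_zero_nth)
  then have "fps_nth (P + Q) k > 0"
    using assms unfolding nonneg_nonzero_def by (simp add: add_pos_nonneg order_le_neq_trans)
  then have "P + Q \<noteq> 0"
    by (metis fps_zero_nth less_irrefl)
  then show ?thesis
    using assms unfolding nonneg_nonzero_def by simp
qed

lemma nonneg_nonzero_mult: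
  assumes "nonneg_nonzero P" "nonneg_nonzero Q"
  shows "nonneg_nonzero (P * Q)"
  using assms unfolding nonneg_nonzero_def by (simp add: fps_mult_nth sum_nonneg)

lemma nonneg_nonzero_const: "c > 0 \<Longrightarrow> nonneg_nonzero (fps_const c)"
  by (simp add: nonneg_nonzero_def)

lemma nonneg_nonzero_X_power: "nonneg_nonzero (fps_X ^ k)"
  by (simp add: nonneg_nonzero_def fps_X_power_nth)

lemma nonneg_nonzero_inverse_power: "nonneg_nonzero (inverse ((1 - fps_X) ^ k))"
proof -
  have geometric: "inverse (1 - fps_X :: real fps) = Abs_fps (\<lambda>_. 1)"
  proof -
    have "inverse (inverse (Abs_fps (\<lambda>_. 1::real))) = Abs_fps (\<lambda>_. 1)"
      by simp
    then show ?thesis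
      by (simp add: fps_inverse_gp')
  qed
  have "nonneg_nonzero (Abs_fps (\<lambda>_. 1::real))"
    by (auto simp: nonneg_nonzero_def fps_eq_iff)
  then have "nonneg_nonzero (Abs_fps (\<lambda>_. 1::real) ^ k)"
    using nonneg_nonzero_const[of 1] by (induction k) (simp_all add: nonneg_nonzero_mult)
  then show ?thesis
    by (simp add: fps_inverse_power geometric)
qed

definition node_weight :: "int set \<Rightarrow> int \<Rightarrow> real" where
  "node_weight T x = (\<Prod>k\<in>T - {x}. real_of_int (k - x))"

lemma node_weight_remove:
  assumes "finite T" "c \<in> T" "c \<noteq> x"
  shows "node_weight T x = real_of_int (c - x) * node_weight (T - {c}) x"
  using prod.remove[of "T - {x}" c "\<lambda>k. real_of_int (k - x)"] assms
  by (simp add: node_weight_def Diff_insert2 [symmetric] insert_commute)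

lemma node_weight_remove_self: "node_weight (T - {x}) x = node_weight T x"
  by (simp add: node_weight_def)

lemma node_weight_nonzero: "finite T \<Longrightarrow> node_weight T x \<noteq> 0"
  by (simp add: node_weight_def prod_zero_iff)

definition pure_numerator :: "int set \<Rightarrow> real fps" where
  "pure_numerator S = Abs_fps (\<lambda>j. if int j \<in> S then inverse (node_weight S (int j)) else 0)"

lemma pure_numerator_nth:
  "fps_nth (pure_numerator S) j = (if int j \<in> S then inverse (node_weight S (int j)) else 0)"
  by (simp add: pure_numerator_def)

lemma pure_numerator_recurrence:
  assumes "finite T" "a \<in> T" "b \<in> T" "a \<noteq> b"
  shows "fps_const (real_of_int (b - a)) * pure_numerator T
           = pure_numerator (T - {b}) - pure_numerator (T - {a})"
proof (rule fps_ext)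
  fix j
  define x where "x = int j"
  have fin: "finite (T - {a})" "finite (T - {b})" "finite (T - {a} - {b})"
    using assms(1) by auto
  consider "a = x" | "b = x" | "x \<noteq> a" "x \<noteq> b" "x \<in> T" | "x \<notin> T"
    by auto
  then show "fps_nth (fps_const (real_of_int (b - a)) * pure_numerator T) j
             = fps_nth (pure_numerator (T - {b}) - pure_numerator (T - {a})) j"
  proof cases
    case 1
    then show ?thesis
      using assms node_weight_nonzero[OF fin(2)]
      by (simp add: pure_numerator_nth x_def [symmetric] node_weight_remove[of T b] node_weight_remove_self)
  next
    case 2
    then show ?thesis
      using assms node_weight_nonzero[OF fin(1)]
      by (simp add: pure_numerator_nth x_def [symmetric] node_weight_remove[of T a] node_weight_remove_self
          field_simps)
  next
    case 3
    have "node_weight T x = real_of_int (a - x) * real_of_int (b - x) * node_weight (T - {a} - {b}) x"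
      "node_weight (T - {a}) x = real_of_int (b - x) * node_weight (T - {a} - {b}) x"
      "node_weight (T - {b}) x = real_of_int (a - x) * node_weight (T - {a} - {b}) x"
      using assms 3 fin node_weight_remove[of T a x] node_weight_remove[of "T - {a}" b x]
        node_weight_remove[of "T - {b}" a x]
      by (simp_all add: Diff_insert2 [symmetric] insert_commute)
    moreover have "real_of_int (b - a) = real_of_int (b - x) - real_of_int (a - x)"
      "real_of_int (a - x) \<noteq> 0" "real_of_int (b - x) \<noteq> 0"
      using 3 by auto
    ultimately show ?thesis
      using 3 node_weight_nonzero[OF fin(3)]
      by (simp add: pure_numerator_nth x_def [symmetric] field_simps del: of_int_diff)
  next
    case 4
    then show ?thesis
      by (simp add: pure_numerator_nth x_def [symmetric])
  qed
qed

lemma pure_numerator_interval: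
  assumes "0 \<le> x0"
  shows "pure_numerator {x0..x0 + int m} = fps_const (1 / fact m) * fps_X ^ nat x0 * (1 - fps_X) ^ m"
  using assms
proof (induction m arbitrary: x0)
  case 0
  show ?case
    by (rule fps_ext) (use 0 in \<open>auto simp: pure_numerator_nth node_weight_def\<close>)
next
  case (Suc m)
  let ?T = "{x0..x0 + int (Suc m)}" and ?c = "fps_const (1 / fact m) :: real fps"
  have "fps_const (real_of_int (x0 + int (Suc m) - x0)) * pure_numerator ?T
          = pure_numerator (?T - {x0 + int (Suc m)}) - pure_numerator (?T - {x0})"
    by (rule pure_numerator_recurrence) auto
  also have "\<dots> = pure_numerator {x0..x0 + int m} - pure_numerator {x0 + 1..(x0 + 1) + int m}"
    by (intro arg_cong2[where f = "(-)"] arg_cong[where f = pure_numerator]) auto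
  also have "\<dots> = ?c * fps_X ^ nat x0 * (1 - fps_X) ^ m - ?c * fps_X ^ nat (x0 + 1) * (1 - fps_X) ^ m"
    using Suc by simp
  also have "\<dots> = ?c * fps_X ^ nat x0 * (1 - fps_X) ^ Suc m"
    using Suc.prems by (simp add: nat_add_distrib algebra_simps)
  finally have "fps_const (real (Suc m)) * pure_numerator ?T = ?c * fps_X ^ nat x0 * (1 - fps_X) ^ Suc m"
    by simp
  then have "fps_const (1 / real (Suc m)) * (fps_const (real (Suc m)) * pure_numerator ?T)
               = fps_const (1 / real (Suc m)) * (?c * fps_X ^ nat x0 * (1 - fps_X) ^ Suc m)"
    by simp
  then show ?case
    by (simp add: mult.assoc [symmetric] del: of_nat_Suc)
qed

lemma pure_numerator_fill_gap:
  assumes "finite S" "lo \<in> S" "hi \<in> S" "lo < y" "y < hi" "y \<notin> S"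
  shows "fps_const (real_of_int (hi - lo)) * pure_numerator S
           = fps_const (real_of_int (hi - y)) * pure_numerator (insert y S - {lo})
             + fps_const (real_of_int (y - lo)) * pure_numerator (insert y S - {hi})"
proof -
  let ?T = "insert y S"
  have "pure_numerator (?T - {lo}) = pure_numerator S - fps_const (real_of_int (y - lo)) * pure_numerator ?T"
    using pure_numerator_recurrence[of ?T lo y] assms by simp
  moreover have "pure_numerator (?T - {hi}) = pure_numerator S + fps_const (real_of_int (hi - y)) * pure_numerator ?T"
    using pure_numerator_recurrence[of ?T y hi] assms by (simp add: algebra_simps)
  moreover have "real_of_int (hi - lo) = real_of_int (hi - y) + real_of_int (y - lo)"
    by simp
  ultimately show ?thesis
    by (simp only: fps_const_add [symmetric] distrib_right) (simp add: algebra_simps del: of_int_diff)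
qed

lemma pure_numerator_interval_factor:
  assumes "S = {lo..lo + int m}" "0 \<le> lo"
  shows "\<exists>Q. pure_numerator S = (1 - fps_X) ^ m * Q \<and> nonneg_nonzero Q"
proof (intro exI conjI)
  show "pure_numerator S = (1 - fps_X) ^ m * (fps_const (1 / fact m) * fps_X ^ nat lo)"
    using pure_numerator_interval[OF assms(2)] assms(1) by (simp add: ac_simps)
  show "nonneg_nonzero (fps_const (1 / fact m) * fps_X ^ nat lo)"
    by (simp add: nonneg_nonzero_mult nonneg_nonzero_const nonneg_nonzero_X_power)
qed

lemma pure_numerator_fill_gap_factor:
  assumes "finite S" "lo \<in> S" "hi \<in> S" "lo < y" "y < hi" "y \<notin> S"
    and "pure_numerator (insert y S - {lo}) = (1 - fps_X) ^ m * Q1" "nonneg_nonzero Q1"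
    and "pure_numerator (insert y S - {hi}) = (1 - fps_X) ^ m * Q2" "nonneg_nonzero Q2"
  shows "\<exists>Q. pure_numerator S = (1 - fps_X) ^ m * Q \<and> nonneg_nonzero Q"
proof (intro exI conjI)
  define c where "c = real_of_int (hi - lo)"
  define Q where "Q = fps_const (1 / c)
    * (fps_const (real_of_int (hi - y)) * Q1 + fps_const (real_of_int (y - lo)) * Q2)"
  have "c > 0"
    using assms(4,5) by (simp add: c_def)
  have gap: "fps_const c * pure_numerator S = fps_const (real_of_int (hi - y)) * ((1 - fps_X) ^ m * Q1)
      + fps_const (real_of_int (y - lo)) * ((1 - fps_X) ^ m * Q2)"
    using pure_numerator_fill_gap[OF assms(1-6)] unfolding c_def assms(7,9) .
  have "pure_numerator S = fps_const (1 / c) * (fps_const c * pure_numerator S)"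
    using \<open>c > 0\<close> by (simp add: mult.assoc [symmetric])
  also have "\<dots> = (1 - fps_X) ^ m * Q"
    unfolding gap Q_def by (simp add: algebra_simps del: fps_const_mult)
  finally show "pure_numerator S = (1 - fps_X) ^ m * Q" .
  show "nonneg_nonzero Q"
    unfolding Q_def using assms(4,5,8,10) \<open>c > 0\<close>
    by (simp add: nonneg_nonzero_add nonneg_nonzero_mult nonneg_nonzero_const)
qed

lemma pure_numerator_factor:
  assumes "finite S" "card S = Suc m" "\<forall>x\<in>S. 0 \<le> x"
  shows "\<exists>Q. pure_numerator S = (1 - fps_X) ^ m * Q \<and> nonneg_nonzero Q"
  using assms
proof (induction "nat (Max S - Min S)" arbitrary: S rule: less_induct)
  case less
  let ?lo = "Min S" and ?hi = "Max S"
  have "S \<noteq> {}"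
    using less.prems by auto
  then have lo: "?lo \<in> S" and hi: "?hi \<in> S"
    using less.prems(1) by simp_all
  have S_sub: "S \<subseteq> {?lo..?hi}"
    using less.prems(1) by (simp add: subset_iff)
  show ?case
  proof (cases "S = {?lo..?hi}")
    case True
    then have "nat (?hi - ?lo + 1) = Suc m"
      using less.prems(2) by (metis card_atLeastAtMost_int)
    then have "?hi = ?lo + int m"
      by linarith
    then have "S = {?lo..?lo + int m}"
      using True by metis
    moreover have "0 \<le> ?lo"
      using less.prems(3) lo by blast
    ultimately show ?thesis
      by (rule pure_numerator_interval_factor)
  next
    case False
    then obtain y where y: "?lo < y" "y < ?hi" "y \<notin> S"
      using S_sub lo hi by (metis atLeastAtMost_iff order_less_le subsetI subset_antisym)
    have narrower: "nat (Max T - Min T) < nat (?hi - ?lo)"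
      if "T \<subseteq> {a..b}" "finite T" "T \<noteq> {}" "?lo \<le> a" "b \<le> ?hi" "?lo < a \<or> b < ?hi" for T a b
    proof -
      have "a \<le> Min T" "Max T \<le> b"
        using that by (auto simp: Min_ge_iff Max_le_iff)
      then show ?thesis
        using that y by linarith
    qed
    have narrower_factor: "\<exists>Q. pure_numerator T = (1 - fps_X) ^ m * Q \<and> nonneg_nonzero Q"
      if "T = insert y S - {z}" "z \<in> S" "T \<subseteq> {a..b}" "?lo \<le> a" "b \<le> ?hi" "?lo < a \<or> b < ?hi"
      for T z a b
    proof (rule less.hyps)
      show "finite T" "card T = Suc m"
        using that less.prems y by auto
      show "\<forall>x\<in>T. 0 \<le> x"
        using that less.prems y lo by force
      have "T \<noteq> {}"
        using \<open>card T = Suc m\<close> by auto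
      then show "nat (Max T - Min T) < nat (?hi - ?lo)"
        using narrower[OF that(3) \<open>finite T\<close>] that(4-6) by blast
    qed
    obtain Q1 where "pure_numerator (insert y S - {?lo}) = (1 - fps_X) ^ m * Q1" "nonneg_nonzero Q1"
      using narrower_factor[of _ ?lo "?lo + 1" ?hi] S_sub y lo by force
    moreover obtain Q2 where "pure_numerator (insert y S - {?hi}) = (1 - fps_X) ^ m * Q2" "nonneg_nonzero Q2"
      using narrower_factor[of _ ?hi ?lo "?hi - 1"] S_sub y hi by force
    ultimately show ?thesis
      using pure_numerator_fill_gap_factor[OF less.prems(1) lo hi y] by blast
  qed
qed

lemma nonneg_nonzero_numerator_quotient:
  assumes "c > 0" "finite S" "S \<noteq> {}" "card S \<le> n + 1" "\<forall>x\<in>S. 0 \<le> x"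
  shows "nonneg_nonzero (fps_const c * pure_numerator S * inverse ((1 - fps_X) ^ n))"
proof -
  obtain m where m: "card S = Suc m"
    using assms(2,3) by (metis card_0_eq not0_implies_Suc)
  then obtain Q where Q: "pure_numerator S = (1 - fps_X) ^ m * Q" "nonneg_nonzero Q"
    using pure_numerator_factor assms(2,5) by blast
  have "(1 - fps_X :: real fps) ^ m * inverse ((1 - fps_X) ^ n) = inverse ((1 - fps_X) ^ (n - m))"
  proof -
    have "(1 - fps_X :: real fps) ^ n = (1 - fps_X) ^ m * (1 - fps_X) ^ (n - m)"
      using m assms(4) by (simp add: power_add [symmetric])
    moreover have "(1 - fps_X :: real fps) ^ m * inverse ((1 - fps_X) ^ m) = 1"
      by (rule inverse_mult_eq_1') (simp add: fps_nth_power_0)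
    ultimately show ?thesis
      by (simp add: fps_inverse_mult mult.assoc [symmetric])
  qed
  then have "fps_const c * pure_numerator S * inverse ((1 - fps_X) ^ n)
               = fps_const c * Q * inverse ((1 - fps_X) ^ (n - m))"
    by (simp add: Q(1) ac_simps)
  moreover have "nonneg_nonzero (fps_const c * Q * inverse ((1 - fps_X) ^ (n - m)))"
    using assms(1) Q(2)
    by (simp add: nonneg_nonzero_mult nonneg_nonzero_const nonneg_nonzero_inverse_power)
  ultimately show ?thesis
    by (simp only:)
qed

definition degree_product :: "int set \<Rightarrow> real" where
  "degree_product S = (\<Prod>x\<in>S - {0}. real_of_int x)"

definition pure_hilbert :: "nat \<Rightarrow> int set \<Rightarrow> real fps" where
  "pure_hilbert n S = fps_const (degree_product S) * pure_numerator S * inverse ((1 - fps_X) ^ n)"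

lemma degree_product_insert:
  "finite S \<Longrightarrow> a \<notin> S \<Longrightarrow> a \<noteq> 0 \<Longrightarrow> degree_product (insert a S) = real_of_int a * degree_product S"
  by (simp add: degree_product_def insert_Diff_if)

lemma degree_product_pos: "finite S \<Longrightarrow> \<forall>x\<in>S. 0 \<le> x \<Longrightarrow> degree_product S > 0"
  unfolding degree_product_def by (rule prod_pos) auto

lemma pure_hilbert_remove_degree:
  assumes "finite S" "0 \<in> S" "d \<in> S" "d \<noteq> 0" "card S \<le> n + 1" "\<forall>x\<in>S. 0 \<le> x"
  shows "nonneg_nonzero (pure_hilbert n (S - {d}) - pure_hilbert n S)"
proof -
  have "pure_numerator (S - {d}) = fps_const (real_of_int d) * pure_numerator S + pure_numerator (S - {0})"
    using pure_numerator_recurrence[of S 0 d] assms by (simp add: algebra_simps)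
  moreover have "degree_product S = real_of_int d * degree_product (S - {d})"
    using degree_product_insert[of "S - {d}" d] assms by (simp add: insert_absorb)
  ultimately have "pure_hilbert n (S - {d}) - pure_hilbert n S
      = fps_const (degree_product (S - {d})) * pure_numerator (S - {0}) * inverse ((1 - fps_X) ^ n)"
    unfolding pure_hilbert_def by (simp add: algebra_simps flip: fps_const_mult)
  moreover have "S - {0} \<noteq> {}" "card (S - {0}) \<le> n + 1"
    using assms by auto
  ultimately show ?thesis
    using assms degree_product_pos[of "S - {d}"] by (simp add: nonneg_nonzero_numerator_quotient)
qed

lemma pure_hilbert_shift_degree:
  assumes "finite S" "0 \<in> S" "d \<in> S" "d > 0" "d + 1 \<notin> S" "card S \<le> n + 1" "\<forall>x\<in>S. 0 \<le> x"
  shows "nonneg_nonzero (pure_hilbert n (insert (d + 1) (S - {d})) - pure_hilbert n S)"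
proof -
  let ?U = "insert (d + 1) S" and ?S' = "insert (d + 1) (S - {d})"
  have "?U - {d} = ?S'"
    by auto
  then have "pure_numerator ?S' = pure_numerator S - pure_numerator ?U"
    using pure_numerator_recurrence[of ?U d "d + 1"] assms by simp
  moreover have "pure_numerator S = fps_const (real_of_int (d + 1)) * pure_numerator ?U + pure_numerator (?U - {0})"
    using pure_numerator_recurrence[of ?U 0 "d + 1"] assms by (simp add: algebra_simps)
  ultimately have numerators: "fps_const (real_of_int (d + 1)) * pure_numerator ?S'
      - fps_const (real_of_int d) * pure_numerator S = pure_numerator (?U - {0})"
    by (simp only:) (simp add: algebra_simps flip: fps_const_add)
  have "degree_product S = real_of_int d * degree_product (S - {d})"
    using degree_product_insert[of "S - {d}" d] assms by (simp add: insert_absorb)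
  moreover have "degree_product ?S' = real_of_int (d + 1) * degree_product (S - {d})"
    using degree_product_insert[of "S - {d}" "d + 1"] assms by simp
  ultimately have "pure_hilbert n ?S' - pure_hilbert n S
      = fps_const (degree_product (S - {d})) * (fps_const (real_of_int (d + 1)) * pure_numerator ?S'
          - fps_const (real_of_int d) * pure_numerator S) * inverse ((1 - fps_X) ^ n)"
    unfolding pure_hilbert_def by (simp add: algebra_simps)
  then have "pure_hilbert n ?S' - pure_hilbert n S
      = fps_const (degree_product (S - {d})) * pure_numerator (?U - {0}) * inverse ((1 - fps_X) ^ n)"
    by (simp only: numerators)
  moreover have "?U - {0} \<noteq> {}" "card (?U - {0}) \<le> n + 1" "\<forall>x\<in>?U - {0}. 0 \<le> x"
    using assms by auto
  ultimately show ?thesis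
    using assms degree_product_pos[of "S - {d}"] by (simp add: nonneg_nonzero_numerator_quotient)
qed

lemma prod_nth_except:
  assumes "distinct ds" "i < length ds"
  shows "(\<Prod>k\<in>{k. k < length ds \<and> k \<noteq> i}. f (ds ! k)) = (\<Prod>x\<in>set ds - {ds ! i}. f x)"
proof -
  have inj: "inj_on (nth ds) {..<length ds}"
    using assms(1) by (simp add: inj_on_nth)
  have "nth ds ` {..<length ds} = set ds"
    by (auto simp: in_set_conv_nth)
  then have "nth ds ` ({..<length ds} - {i}) = set ds - {ds ! i}"
    using inj assms(2) by (simp add: inj_on_image_set_diff)
  moreover have "{k. k < length ds \<and> k \<noteq> i} = {..<length ds} - {i}"
    by auto
  ultimately show ?thesis
    using prod.reindex[of "nth ds" "{..<length ds} - {i}" f] inj by (simp add: inj_on_diff)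
qed

lemma alternating_column_sum:
  assumes "distinct ds" "length ds \<le> n + 1"
  shows "(\<Sum>i\<le>n. (-1) ^ i * pure_diagram ds i (int j)) = fps_nth (pure_numerator (set ds)) j"
proof (cases "int j \<in> set ds")
  case True
  then obtain i0 where i0: "i0 < length ds" "ds ! i0 = int j"
    by (auto simp: in_set_conv_nth)
  have "(-1) ^ i * pure_diagram ds i (int j)
          = (if i = i0 then inverse (node_weight (set ds) (int j)) else 0)" for i
  proof (cases "i = i0")
    case True
    have "(-1) ^ i0 * (-1) ^ i0 = (1::real)"
      by (simp flip: power_add)
    then show ?thesis
      using True i0 prod_nth_except[OF assms(1) i0(1), of "\<lambda>x. inverse (real_of_int (x - int j))"]
        prod_inversef[of "\<lambda>x. real_of_int (x - int j)" "set ds - {int j}", unfolded comp_def]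
      by (simp add: pure_diagram_def node_weight_def divide_inverse mult.assoc [symmetric])
  next
    case False
    then show ?thesis
      using i0 assms(1) by (auto simp: pure_diagram_def nth_eq_iff_index_eq)
  qed
  then show ?thesis
    using True i0 assms(2) by (simp add: pure_numerator_nth)
next
  case False
  then have "pure_diagram ds i (int j) = 0" for i
    by (auto simp: pure_diagram_def)
  then show ?thesis
    using False by (simp add: pure_numerator_nth)
qed

definition admissible_degs :: "nat \<Rightarrow> int list \<Rightarrow> bool" where
  "admissible_degs n ds \<longleftrightarrow> strict_degs ds \<and> hd ds = 0 \<and> length ds \<le> n + 1"

lemma admissible_degsD:
  assumes "admissible_degs n ds"
  shows "sorted_wrt (<) ds" "distinct ds" "ds \<noteq> []" "ds ! 0 = 0" "length ds \<le> n + 1"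
    "card (set ds) = length ds" "0 \<in> set ds" "\<forall>x\<in>set ds. 0 \<le> x"
proof -
  show sorted: "sorted_wrt (<) ds" and "ds \<noteq> []" "length ds \<le> n + 1"
    using assms by (auto simp: admissible_degs_def strict_degs_def)
  then show "distinct ds" "card (set ds) = length ds"
    by (simp_all add: strict_sorted_iff distinct_card)
  show "ds ! 0 = 0"
    using assms \<open>ds \<noteq> []\<close> by (simp add: admissible_degs_def hd_conv_nth)
  then show "0 \<in> set ds"
    using \<open>ds \<noteq> []\<close> by (metis length_greater_0_conv nth_mem)
  show "\<forall>x\<in>set ds. 0 \<le> x"
  proof
    fix x assume "x \<in> set ds"
    then obtain k where "k < length ds" "ds ! k = x"
      by (auto simp: in_set_conv_nth)
    then show "0 \<le> x"
      using sorted_wrt_nth_less[OF sorted, of 0 k] \<open>ds ! 0 = 0\<close> by (cases k) auto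
  qed
qed

lemma hilbert_series_norm_pure_diagram:
  assumes "admissible_degs n ds"
  shows "hilbert_series n (norm_pure_diagram ds) = pure_hilbert n (set ds)"
proof -
  note ds = admissible_degsD[OF assms]
  have "{1..<length ds} = {k. k < length ds \<and> k \<noteq> 0}"
    by auto
  then have "(\<Prod>k\<in>{1..<length ds}. real_of_int (ds ! k)) = degree_product (set ds)"
    using prod_nth_except[OF ds(2), of 0 real_of_int] ds(3,4) by (simp add: degree_product_def)
  then have "(\<Sum>i\<le>n. (-1) ^ i * norm_pure_diagram ds i (int j))
               = degree_product (set ds) * fps_nth (pure_numerator (set ds)) j" for j
    using alternating_column_sum[OF ds(2,5)]
    by (simp add: norm_pure_diagram_def mult.left_commute flip: sum_distrib_left)
  then show ?thesis
    unfolding hilbert_series_def pure_hilbert_def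
    by (intro arg_cong[where f = "\<lambda>x. x * _"] fps_ext) simp
qed

lemma sorted_wrt_less_update_succ:
  fixes ds :: "int list"
  assumes "sorted_wrt (<) ds" "i < length ds" "\<And>q. i < q \<Longrightarrow> q < length ds \<Longrightarrow> ds ! i + 1 < ds ! q"
  shows "sorted_wrt (<) (ds[i := ds ! i + 1])" "ds ! i + 1 \<notin> set ds"
proof -
  show "sorted_wrt (<) (ds[i := ds ! i + 1])"
    unfolding sorted_wrt_iff_nth_less
  proof (intro allI impI)
    fix p q
    assume "p < q" "q < length (ds[i := ds ! i + 1])"
    moreover have "ds ! p < ds ! q"
      using sorted_wrt_nth_less[OF assms(1)] calculation by simp
    ultimately show "ds[i := ds ! i + 1] ! p < ds[i := ds ! i + 1] ! q"
      using assms(2,3) by (auto simp: nth_list_update)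
  qed
  show "ds ! i + 1 \<notin> set ds"
  proof
    assume "ds ! i + 1 \<in> set ds"
    then obtain q where q: "q < length ds" "ds ! q = ds ! i + 1"
      by (metis in_set_conv_nth)
    show False
    proof (cases "i < q")
      case True
      then show False
        using assms(3)[OF True q(1)] q(2) by simp
    next
      case False
      then have "ds ! q \<le> ds ! i"
        using sorted_wrt_nth_less[OF assms(1), of q i] assms(2) by (cases "q = i") auto
      then show False
        using q(2) by simp
    qed
  qed
qed

lemma last_strict_index:
  fixes xs ys :: "'a::linorder list"
  assumes "length xs = length ys" "\<forall>q<length xs. xs ! q \<le> ys ! q" "xs \<noteq> ys"
  obtains i where "i < length xs" "xs ! i < ys ! i" "\<And>q. i < q \<Longrightarrow> q < length xs \<Longrightarrow> xs ! q = ys ! q"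
proof -
  define I where "I = {i. i < length xs \<and> xs ! i < ys ! i}"
  have equal_outside: "xs ! q = ys ! q" if "q < length xs" "q \<notin> I" for q
    using spec[OF assms(2), of q] that by (auto simp: I_def order_le_less)
  have "finite I"
    by (simp add: I_def)
  have "I \<noteq> {}"
  proof
    assume "I = {}"
    then have "xs = ys"
      using assms(1) equal_outside by (intro nth_equalityI) auto
    then show False
      using assms(3) by simp
  qed
  then have "Max I \<in> I"
    using \<open>finite I\<close> by simp
  moreover have "xs ! q = ys ! q" if "Max I < q" "q < length xs" for q
  proof (rule equal_outside[OF that(2)])
    show "q \<notin> I"
      using that(1) Max_ge[OF \<open>finite I\<close>, of q] by linarith
  qed
  ultimately show ?thesis
    using that[of "Max I"] unfolding I_def by blast
qed

definition degs_distance :: "int list \<Rightarrow> int list \<Rightarrow> nat" where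
  "degs_distance ds ds' = (length ds - length ds') + (\<Sum>i<length ds'. nat (ds' ! i - ds ! i))"

lemma degs_step_butlast:
  assumes ds: "admissible_degs n ds" and "degs_le ds ds'" "ds' \<noteq> []" "length ds' < length ds"
  shows "admissible_degs n (butlast ds)" "degs_le (butlast ds) ds'"
    "degs_distance (butlast ds) ds' < degs_distance ds ds'"
    "nonneg_nonzero (pure_hilbert n (set (butlast ds)) - pure_hilbert n (set ds))"
proof -
  note D = admissible_degsD[OF ds]
  obtain bs d where ds_eq: "ds = bs @ [d]"
    using D(3) rev_exhaust by blast
  have "bs \<noteq> []"
    using assms(3,4) ds_eq by (cases ds') auto
  then have "hd bs = 0" "bs ! 0 = 0"
    using D(4) ds_eq by (simp_all add: hd_conv_nth nth_append)
  show "admissible_degs n (butlast ds)"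
    using \<open>bs \<noteq> []\<close> \<open>hd bs = 0\<close> D(1,5) ds_eq
    by (simp add: admissible_degs_def strict_degs_def sorted_wrt_append)
  have nth_bs: "bs ! i = ds ! i" if "i < length ds'" for i
    using that assms(4) ds_eq by (simp add: nth_append)
  show "degs_le (butlast ds) ds'"
    using assms(2,4) nth_bs ds_eq by (auto simp: degs_le_def)
  show "degs_distance (butlast ds) ds' < degs_distance ds ds'"
    using assms(4) nth_bs ds_eq by (simp add: degs_distance_def)
  have "d \<noteq> 0"
    using D(1) \<open>bs \<noteq> []\<close> \<open>bs ! 0 = 0\<close> ds_eq nth_mem[of 0 bs] by (auto simp: sorted_wrt_append)
  moreover have "set (butlast ds) = set ds - {d}"
    using D(2) ds_eq by auto
  ultimately show "nonneg_nonzero (pure_hilbert n (set (butlast ds)) - pure_hilbert n (set ds))"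
    using pure_hilbert_remove_degree[of "set ds" d n] D(5-8) ds_eq by simp
qed

lemma degs_step_raise:
  assumes ds: "admissible_degs n ds" and ds': "admissible_degs n ds'"
    and le: "degs_le ds ds'" and len: "length ds = length ds'" and "ds \<noteq> ds'"
  shows "\<exists>e. admissible_degs n e \<and> degs_le e ds' \<and> degs_distance e ds' < degs_distance ds ds'
             \<and> nonneg_nonzero (pure_hilbert n (set e) - pure_hilbert n (set ds))"
proof -
  note D = admissible_degsD[OF ds] and D' = admissible_degsD[OF ds']
  have le_nth: "\<forall>q<length ds. ds ! q \<le> ds' ! q"
    using le len by (simp add: degs_le_def)
  obtain i where i: "i < length ds" "ds ! i < ds' ! i"
    and above: "\<And>q. i < q \<Longrightarrow> q < length ds \<Longrightarrow> ds ! q = ds' ! q"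
    using last_strict_index[OF len le_nth \<open>ds \<noteq> ds'\<close>] by blast
  define a where "a = ds ! i"
  have "i \<noteq> 0"
    using i D(4) D'(4) by (cases i) auto
  then have "a > 0"
    using sorted_wrt_nth_less[OF D(1), of 0 i] i D(4) by (simp add: a_def)
  have beyond: "a + 1 < ds ! q" if "i < q" "q < length ds" for q
    using sorted_wrt_nth_less[OF D'(1), of i q] above[OF that] that i len by (simp add: a_def)
  define e where "e = ds[i := a + 1]"
  have "admissible_degs n e"
    using sorted_wrt_less_update_succ(1)[OF D(1) i(1)] beyond D(3-5) \<open>i \<noteq> 0\<close>
    by (simp add: admissible_degs_def strict_degs_def e_def a_def hd_conv_nth)
  moreover have "degs_le e ds'"
    using le_nth i len by (auto simp: degs_le_def e_def a_def nth_list_update)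
  moreover have "degs_distance e ds' < degs_distance ds ds'"
    unfolding degs_distance_def
  proof (intro add_le_less_mono sum_strict_mono_ex1)
    show "\<forall>q\<in>{..<length ds'}. nat (ds' ! q - e ! q) \<le> nat (ds' ! q - ds ! q)"
      using i(1) by (simp add: e_def a_def nth_list_update nat_mono)
    show "\<exists>q\<in>{..<length ds'}. nat (ds' ! q - e ! q) < nat (ds' ! q - ds ! q)"
      using i len by (intro bexI[of _ i]) (auto simp: e_def a_def)
  qed (simp_all add: e_def)
  moreover have "set e = insert (a + 1) (set ds - {a})"
    using set_update_distinct[OF D(2) i(1)] by (simp add: e_def a_def)
  moreover have "a \<in> set ds" "a + 1 \<notin> set ds"
    using i sorted_wrt_less_update_succ(2)[OF D(1) i(1)] beyond by (simp_all add: a_def)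
  ultimately show ?thesis
    using pure_hilbert_shift_degree[of "set ds" a n] D(5-8) \<open>a > 0\<close> by auto
qed

lemma degs_less_step:
  assumes ds: "admissible_degs n ds" and ds': "admissible_degs n ds'" and "degs_less ds ds'"
  shows "\<exists>e. admissible_degs n e \<and> degs_le e ds' \<and> degs_distance e ds' < degs_distance ds ds'
             \<and> nonneg_nonzero (pure_hilbert n (set e) - pure_hilbert n (set ds))"
proof -
  have le: "degs_le ds ds'" and "ds \<noteq> ds'"
    using assms(3) by (simp_all add: degs_less_def)
  show ?thesis
  proof (cases "length ds' < length ds")
    case True
    show ?thesis
      using degs_step_butlast[OF ds le admissible_degsD(3)[OF ds'] True] by blast
  next
    case False
    then have "length ds = length ds'"
      using le by (simp add: degs_le_def)
    then show ?thesis
      using degs_step_raise[OF ds ds' le _ \<open>ds \<noteq> ds'\<close>] by blast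
  qed
qed

lemma pure_hilbert_strict_mono:
  assumes "admissible_degs n ds" "admissible_degs n ds'" "degs_less ds ds'"
  shows "nonneg_nonzero (pure_hilbert n (set ds') - pure_hilbert n (set ds))"
  using assms
proof (induction "degs_distance ds ds'" arbitrary: ds rule: less_induct)
  case less
  obtain e where e: "admissible_degs n e" "degs_le e ds'" "degs_distance e ds' < degs_distance ds ds'"
    and step: "nonneg_nonzero (pure_hilbert n (set e) - pure_hilbert n (set ds))"
    using degs_less_step[OF less.prems] by blast
  show ?case
  proof (cases "e = ds'")
    case True
    then show ?thesis
      using step by simp
  next
    case False
    then have "nonneg_nonzero (pure_hilbert n (set ds') - pure_hilbert n (set e))"
      using less.hyps[OF e(3) e(1) less.prems(2)] e(2) by (simp add: degs_less_def)
    then have "nonneg_nonzero ((pure_hilbert n (set ds') - pure_hilbert n (set e))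
        + (pure_hilbert n (set e) - pure_hilbert n (set ds)))"
      using nonneg_nonzero_add step by blast
    then show ?thesis
      by simp
  qed
qed

theorem proposition4p4:
  fixes n :: nat and ds ds' :: "int list"
  assumes "n \<ge> 1"
    and "strict_degs ds" and "hd ds = 0" and "length ds \<le> n + 1"
    and "strict_degs ds'" and "hd ds' = 0" and "length ds' \<le> n + 1"
    and "degs_less ds ds'"
  shows "hilbert_series n (norm_pure_diagram ds') - hilbert_series n (norm_pure_diagram ds) \<noteq> 0
         \<and> (\<forall>k. fps_nth (hilbert_series n (norm_pure_diagram ds')
                         - hilbert_series n (norm_pure_diagram ds)) k \<ge> 0)"
proof -
  have "admissible_degs n ds" "admissible_degs n ds'"
    using assms by (simp_all add: admissible_degs_def)
  then have "nonneg_nonzero (hilbert_series n (norm_pure_diagram ds') - hilbert_series n (norm_pure_diagram ds))"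
    using pure_hilbert_strict_mono[OF _ _ assms(8)] by (simp only: hilbert_series_norm_pure_diagram)
  then show ?thesis
    unfolding nonneg_nonzero_def by blast
qed

end
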